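(* Under the model and the scheme described in the context, for every $t\ge 1$, $\Pr(Q_t=AB)=|1-\alpha-\beta|^t$; consequently the scheme is decodable and has average normalized download cost $\ell_t/L=1+|1-\alpha-\beta|^t$ for $t\ge1$ (and $\ell_t/L=2$ for $t\le 0$), where $\ell(A)=\ell(B)=L$, $\ell(AB)=2L$ and $\ell_t=\mathbb{E}[\ell(Q_t)]$.
   Context: Model. Fix $\alpha,\beta\in[0,1]$ and a positive integer $L$. There are two sources, $A$ and $B$. At each time $t\in\mathbb{Z}$ each source $x\in\{A,B\}$ produces a message $W_{x,t}$ uniformly distributed on $\{0,1\}^L$; all messages are mutually independent. The user's requests $\{X_t\}_{t\in\mathbb{Z}}$ form a time-homogeneous Markov chain on $\{A,B\}$ with $\Pr(X_{t+1}=B\mid X_t=A)=\alpha$ and $\Pr(X_{t+1}=A\mid X_t=B)=\beta$, and $0<\Pr(X_t=A)<1$ for every $t$. The user has mutually independent local randomness $\{S_t\}_{t\in\mathbb{Z}}$, and $\{X_t\}$, $\{W_{x,t}\}$, $\{S_t\}$ are mutually independent. Decodability means the user's desired message $W_{X_t,t}$ is a function of the answer at time $t$. Scheme. Query alphabet $\{A,B,AB\}$. The answer to query $A$ is $W_{A,t}$, to $B$ is $W_{B,t}$, to $AB$ is $(W_{A,t},W_{B,t})$. For $t\le 0$, $Q_t=AB$. For $t\ge1$, $Q_t$ is generated from $(X_0,X_t,Q_{t-1})$ and fresh randomness $S_t$ (so that, given $(X_0,X_t,Q_{t-1})$, $Q_t$ is conditionally independent of all other requests and queries) as follows. If $Q_{t-1}\in\{A,B\}$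 then $Q_t=X_t$. If $Q_{t-1}=AB$, then the conditional law of $Q_t$ given $(X_0,X_t)$ is: (i) if $\alpha+\beta<1$: for $(X_0,X_t)=(A,A)$, $Q_t=A$ w.p. $\beta/(1-\alpha)$ and $Q_t=AB$ w.p. $(1-\alpha-\beta)/(1-\alpha)$; for $(A,B)$, $Q_t=B$; for $(B,A)$, $Q_t=A$; for $(B,B)$, $Q_t=B$ w.p. $\alpha/(1-\beta)$ and $Q_t=AB$ w.p. $(1-\alpha-\beta)/(1-\beta)$; (ii) if $\alpha+\beta=1$: $Q_t=X_t$; (iii) if $\alpha+\beta>1$ and $t$ even: for $(A,A)$, $Q_t=A$ w.p. $(1-\alpha)/\beta$ and $AB$ w.p. $(\alpha+\beta-1)/\beta$; for $(A,B)$, $Q_t=B$; for $(B,A)$, $Q_t=A$; for $(B,B)$, $Q_t=B$ w.p. $(1-\beta)/\alpha$ and $AB$ w.p. $(\alpha+\beta-1)/\alpha$; (iv) if $\alpha+\beta>1$ and $t$ odd: for $(A,A)$, $Q_t=A$; for $(A,B)$, $Q_t=B$ w.p. $(1-\beta)/\alpha$ and $AB$ w.p. $(\alpha+\beta-1)/\alpha$; for $(B,A)$, $Q_t=A$ w.p. $(1-\alpha)/\beta$ and $AB$ w.p. $(\alpha+\beta-1)/\beta$; for $(B,B)$, $Q_t=B$. *)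

theory Defs
  imports "HOL-Probability.Probability"
begin

datatype src = SrcA | SrcB
datatype qry = QA | QB | QAB
datatype answer = Single "bool list" | Both "bool list" "bool list"

definition trans_prob :: "real \<Rightarrow> real \<Rightarrow> src \<Rightarrow> src \<Rightarrow> real" where
  "trans_prob \<alpha> \<beta> x y =
     (case (x, y) of (SrcA, SrcA) \<Rightarrow> 1 - \<alpha> | (SrcA, SrcB) \<Rightarrow> \<alpha>
                   | (SrcB, SrcA) \<Rightarrow> \<beta> | (SrcB, SrcB) \<Rightarrow> 1 - \<beta>)"

definition src_query :: "src \<Rightarrow> qry" where
  "src_query x = (case x of SrcA \<Rightarrow> QA | SrcB \<Rightarrow> QB)"

definition ind :: "bool \<Rightarrow> real" where
  "ind b = (if b then 1 else 0)"

text \<open>Conditional law of Q_t (t >= 1) given (X_0, X_t, Q_{t-1}) = (x0, xt, q):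
  probability that Q_t = q'.\<close>
definition scheme_kernel :: "real \<Rightarrow> real \<Rightarrow> int \<Rightarrow> src \<Rightarrow> src \<Rightarrow> qry \<Rightarrow> qry \<Rightarrow> real" where
  "scheme_kernel \<alpha> \<beta> t x0 xt q q' =
    (if q \<noteq> QAB then ind (q' = src_query xt)
     else if \<alpha> + \<beta> < 1 then
       (case (x0, xt) of
          (SrcA, SrcA) \<Rightarrow> (if q' = QA then \<beta> / (1 - \<alpha>)
                           else if q' = QAB then (1 - \<alpha> - \<beta>) / (1 - \<alpha>) else 0)
        | (SrcA, SrcB) \<Rightarrow> ind (q' = QB)
        | (SrcB, SrcA) \<Rightarrow> ind (q' = QA)
        | (SrcB, SrcB) \<Rightarrow> (if q' = QB then \<alpha> / (1 - \<beta>)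
                           else if q' = QAB then (1 - \<alpha> - \<beta>) / (1 - \<beta>) else 0))
     else if \<alpha> + \<beta> = 1 then ind (q' = src_query xt)
     else if even t then
       (case (x0, xt) of
          (SrcA, SrcA) \<Rightarrow> (if q' = QA then (1 - \<alpha>) / \<beta>
                           else if q' = QAB then (\<alpha> + \<beta> - 1) / \<beta> else 0)
        | (SrcA, SrcB) \<Rightarrow> ind (q' = QB)
        | (SrcB, SrcA) \<Rightarrow> ind (q' = QA)
        | (SrcB, SrcB) \<Rightarrow> (if q' = QB then (1 - \<beta>) / \<alpha>
                           else if q' = QAB then (\<alpha> + \<beta> - 1) / \<alpha> else 0))
     else
       (case (x0, xt) of
          (SrcA, SrcA) \<Rightarrow> ind (q' = QA)
        | (SrcA, SrcB) \<Rightarrow> (if q' = QB then (1 - \<beta>) / \<alpha>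
                           else if q' = QAB then (\<alpha> + \<beta> - 1) / \<alpha> else 0)
        | (SrcB, SrcA) \<Rightarrow> (if q' = QA then (1 - \<alpha>) / \<beta>
                           else if q' = QAB then (\<alpha> + \<beta> - 1) / \<beta> else 0)
        | (SrcB, SrcB) \<Rightarrow> ind (q' = QB)))"

definition answer_of :: "qry \<Rightarrow> bool list \<Rightarrow> bool list \<Rightarrow> answer" where
  "answer_of q wa wb = (case q of QA \<Rightarrow> Single wa | QB \<Rightarrow> Single wb | QAB \<Rightarrow> Both wa wb)"

definition cost :: "nat \<Rightarrow> qry \<Rightarrow> real" where
  "cost L q = (case q of QA \<Rightarrow> real L | QB \<Rightarrow> real L | QAB \<Rightarrow> 2 * real L)"

text \<open>Mutual independence of: the whole request process {X_t}, each S_t, and each W_{x,t}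
  (i.e. {X}, {W}, {S} mutually independent, messages mutually independent,
  local randomness mutually independent).\<close>
definition model_indep ::
  "'w measure \<Rightarrow> (int \<Rightarrow> 'w \<Rightarrow> src) \<Rightarrow> 's measure \<Rightarrow> (int \<Rightarrow> 'w \<Rightarrow> 's)
     \<Rightarrow> (src \<Rightarrow> int \<Rightarrow> 'w \<Rightarrow> bool list) \<Rightarrow> bool" where
  "model_indep M X N S W =
     prob_space.indep_sets M
       (\<lambda>i. case i of
           Inl None \<Rightarrow> sigma_sets (space M) {X t -` {x} \<inter> space M | t x. True}
         | Inl (Some t) \<Rightarrow> {S t -` E \<inter> space M | E. E \<in> sets N}
         | Inr (x, t) \<Rightarrow> {W x t -` E \<inter> space M | E. True})
       (UNIV :: (int option + src \<times> int) set)"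

end

theory Submission imports Defs begin

text \<open>The query is still AB at time t only if it was AB at every earlier step. By the
  kernel, staying AB at step s forces the request X_s onto a deterministic track starting
  from X_0 (constant if \<alpha> + \<beta> < 1, alternating if \<alpha> + \<beta> > 1), and along that track the
  Markov transition probability times the kernel's probability of staying AB is exactly
  |1 - \<alpha> - \<beta>|. Since the requests are independent of the local randomness, these factors
  multiply, giving Pr(Q_t = AB) = |1 - \<alpha> - \<beta>|^t. Whenever the query is not AB it equals the
  requested source, so the answer always contains the desired message, and the expected
  cost is L + L Pr(Q_t = AB).\<close>

instance src :: countable by countable_datatype
instance qry :: countable by countable_datatype

definition other_src :: "src \<Rightarrow> src" where
  "other_src x = (case x of SrcA \<Rightarrow> SrcB | SrcB \<Rightarrow> SrcA)"

definition ab_track :: "real \<Rightarrow> real \<Rightarrow> src \<Rightarrow> int \<Rightarrow> src" where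
  "ab_track \<alpha> \<beta> x0 s = (if \<alpha> + \<beta> > 1 \<and> odd s then other_src x0 else x0)"

lemma ab_track_0 [simp]: "ab_track \<alpha> \<beta> x0 0 = x0"
  by (simp add: ab_track_def)

lemma scheme_kernel_single_to_QAB:
  "q \<noteq> QAB \<Longrightarrow> scheme_kernel \<alpha> \<beta> s x0 xt q QAB = 0"
  by (cases xt) (auto simp: scheme_kernel_def ind_def src_query_def)

lemma scheme_kernel_support:
  "scheme_kernel \<alpha> \<beta> s x0 xt q q' \<noteq> 0 \<Longrightarrow> q' = src_query xt \<or> q' = QAB"
  by (cases xt; cases x0; cases q')
     (auto simp: scheme_kernel_def ind_def src_query_def split: if_splits)

lemma scheme_kernel_QAB_QAB_imp_track:
  "scheme_kernel \<alpha> \<beta> s x0 xt QAB QAB \<noteq> 0 \<Longrightarrow> xt = ab_track \<alpha> \<beta> x0 s"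
  by (cases xt; cases x0)
     (auto simp: scheme_kernel_def ind_def src_query_def ab_track_def other_src_def split: if_splits)

lemma trans_prob_mult_scheme_kernel_track:
  assumes "0 \<le> \<alpha>" "\<alpha> \<le> 1" "0 \<le> \<beta>" "\<beta> \<le> 1"
  shows "trans_prob \<alpha> \<beta> (ab_track \<alpha> \<beta> x0 (s - 1)) (ab_track \<alpha> \<beta> x0 s)
           * scheme_kernel \<alpha> \<beta> s x0 (ab_track \<alpha> \<beta> x0 s) QAB QAB = \<bar>1 - \<alpha> - \<beta>\<bar>"
proof -
  consider "\<alpha> + \<beta> < 1" | "\<alpha> + \<beta> = 1" | "\<alpha> + \<beta> > 1" by linarith
  then show ?thesis
  proof cases
    case 1
    then have "1 - \<alpha> > 0" "1 - \<beta> > 0" using assms by auto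
    with 1 show ?thesis
      by (cases x0) (auto simp: scheme_kernel_def trans_prob_def ab_track_def)
  next
    case 2
    then show ?thesis
      by (cases x0) (auto simp: scheme_kernel_def trans_prob_def ab_track_def ind_def src_query_def)
  next
    case 3
    then have "\<alpha> > 0" "\<beta> > 0" using assms by auto
    with 3 show ?thesis
      by (cases x0; cases "even s")
         (auto simp: scheme_kernel_def trans_prob_def ab_track_def other_src_def)
  qed
qed

lemma markov_path_prob:
  assumes markov: "\<And>t (n::nat) h y.
      measure M {\<omega> \<in> space M. X (t + 1) \<omega> = y \<and> (\<forall>i\<in>{t - int n..t}. X i \<omega> = h i)}
      = p (h t) y * measure M {\<omega> \<in> space M. \<forall>i\<in>{t - int n..t}. X i \<omega> = h i}"
  shows "measure M {\<omega> \<in> space M. \<forall>i\<in>{0..int m}. X i \<omega> = h i}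
       = measure M {\<omega> \<in> space M. X 0 \<omega> = h 0} * (\<Prod>s\<in>{1..int m}. p (h (s - 1)) (h s))"
proof (induction m)
  case 0
  then show ?case by simp
next
  case (Suc m)
  have "{0..int (Suc m)} = insert (int m + 1) {int m - int m..int m}" by auto
  then have "{\<omega> \<in> space M. \<forall>i\<in>{0..int (Suc m)}. X i \<omega> = h i}
      = {\<omega> \<in> space M. X (int m + 1) \<omega> = h (int m + 1) \<and> (\<forall>i\<in>{int m - int m..int m}. X i \<omega> = h i)}"
    by auto
  moreover have "{1..int (Suc m)} = insert (int m + 1) {1..int m}" by auto
  ultimately show ?case
    using markov[where t="int m" and n=m] Suc by (simp add: mult_ac)
qed

lemma (in prob_space) indep_sets_reindex:
  assumes indep: "indep_sets F (f ` I)" and inj: "inj_on f I"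
  shows "indep_sets (F \<circ> f) I"
proof (rule indep_setsI)
  show "(F \<circ> f) i \<subseteq> events" if "i \<in> I" for i
    using indep that unfolding indep_sets_def by auto
next
  fix A J assume J: "J \<noteq> {}" "J \<subseteq> I" "finite J" and A: "\<forall>j\<in>J. A j \<in> (F \<circ> f) j"
  have inj_J: "inj_on f J" using inj J(2) by (rule inj_on_subset)
  let ?A = "\<lambda>k. A (the_inv_into J f k)"
  have "prob (\<Inter>k\<in>f ` J. ?A k) = (\<Prod>k\<in>f ` J. prob (?A k))"
    using J A inj_J by (intro indep_setsD[OF indep]) (auto simp: the_inv_into_f_f)
  then show "prob (\<Inter>j\<in>J. A j) = (\<Prod>j\<in>J. prob (A j))"
    using inj_J by (simp add: prod.reindex the_inv_into_f_f)
qed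

lemma model_indep_requests_randomness:
  assumes "prob_space M" "model_indep M X N S W"
  shows "prob_space.indep_sets M
           (\<lambda>i. case i of None \<Rightarrow> sigma_sets (space M) {X t -` {x} \<inter> space M | t x. True}
                        | Some t \<Rightarrow> {S t -` E \<inter> space M | E. E \<in> sets N}) UNIV"
proof -
  interpret prob_space M by fact
  let ?E = "\<lambda>i. case i of
           Inl None \<Rightarrow> sigma_sets (space M) {X t -` {x} \<inter> space M | t x. True}
         | Inl (Some t) \<Rightarrow> {S t -` E \<inter> space M | E. E \<in> sets N}
         | Inr (x, t) \<Rightarrow> {W x t -` E \<inter> space M | E. True}"
  have "indep_sets ?E UNIV"
    using assms(2) by (simp add: model_indep_def)
  then have "indep_sets ?E (range Inl)"
    by (rule indep_sets_mono_index[rotated]) simp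
  then have "indep_sets (?E \<circ> Inl) UNIV"
    by (rule indep_sets_reindex) simp
  moreover have "?E \<circ> Inl = (\<lambda>i. case i of
           None \<Rightarrow> sigma_sets (space M) {X t -` {x} \<inter> space M | t x. True}
         | Some t \<Rightarrow> {S t -` E \<inter> space M | E. E \<in> sets N})"
    by (auto simp: fun_eq_iff split: option.split)
  ultimately show ?thesis by simp
qed

locale ab_query_scheme = prob_space M
  for M :: "'w measure" and N :: "'s measure" and \<alpha> \<beta> :: real
    and X :: "int \<Rightarrow> 'w \<Rightarrow> src" and S :: "int \<Rightarrow> 'w \<Rightarrow> 's"
    and F :: "int \<Rightarrow> src \<Rightarrow> src \<Rightarrow> qry \<Rightarrow> 's \<Rightarrow> qry" and Q :: "int \<Rightarrow> 'w \<Rightarrow> qry" +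
  assumes ab: "0 \<le> \<alpha>" "\<alpha> \<le> 1" "0 \<le> \<beta>" "\<beta> \<le> 1"
    and X_meas: "\<And>t. X t \<in> M \<rightarrow>\<^sub>M count_space UNIV"
    and markov: "\<And>t (n::nat) (h::int \<Rightarrow> src) y.
        measure M {\<omega> \<in> space M. X (t + 1) \<omega> = y \<and> (\<forall>i\<in>{t - int n..t}. X i \<omega> = h i)}
        = trans_prob \<alpha> \<beta> (h t) y * measure M {\<omega> \<in> space M. \<forall>i\<in>{t - int n..t}. X i \<omega> = h i}"
    and S_meas: "\<And>t. S t \<in> M \<rightarrow>\<^sub>M N"
    and indep: "indep_sets
        (\<lambda>i. case i of None \<Rightarrow> sigma_sets (space M) {X t -` {x} \<inter> space M | t x. True}
                     | Some t \<Rightarrow> {S t -` E \<inter> space M | E. E \<in> sets N}) UNIV"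
    and F_meas: "\<And>t x0 xt q. F t x0 xt q \<in> N \<rightarrow>\<^sub>M count_space UNIV"
    and F_law: "\<And>t x0 xt q q'. t \<ge> 1 \<Longrightarrow>
        prob {\<omega> \<in> space M. F t x0 xt q (S t \<omega>) = q'} = scheme_kernel \<alpha> \<beta> t x0 xt q q'"
    and Q_init: "\<And>t \<omega>. t \<le> 0 \<Longrightarrow> Q t \<omega> = QAB"
    and Q_step: "\<And>t \<omega>. t \<ge> 1 \<Longrightarrow> Q t \<omega> = F t (X 0 \<omega>) (X t \<omega>) (Q (t - 1) \<omega>) (S t \<omega>)"
begin

declare X_meas [measurable] S_meas [measurable] F_meas [measurable]

lemma Q_measurable [measurable]: "Q t \<in> M \<rightarrow>\<^sub>M count_space UNIV"
proof -
  have "Q (int m) \<in> M \<rightarrow>\<^sub>M count_space UNIV" for m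
  proof (induction m)
    case 0
    then show ?case using Q_init by simp
  next
    case (Suc m)
    note [measurable] = Suc.IH
    have "Q (int (Suc m))
        = (\<lambda>\<omega>. F (int m + 1) (X 0 \<omega>) (X (int m + 1) \<omega>) (Q (int m) \<omega>) (S (int m + 1) \<omega>))"
      using Q_step[of "int m + 1"] by (auto simp: fun_eq_iff add.commute)
    then show ?case by simp
  qed
  moreover have "Q t = (\<lambda>_. QAB)" if "t \<le> 0" using Q_init that by auto
  ultimately show ?thesis
    by (cases "t \<le> 0") (simp_all, metis nonneg_int_cases linorder_linear)
qed

definition on_kernel_support :: "'w \<Rightarrow> bool" where
  "on_kernel_support \<omega> \<longleftrightarrow>
     (\<forall>s\<ge>1. \<forall>x0 xt q. scheme_kernel \<alpha> \<beta> s x0 xt q (F s x0 xt q (S s \<omega>)) \<noteq> 0)"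

lemma AE_on_kernel_support: "AE \<omega> in M. on_kernel_support \<omega>"
proof -
  have "AE \<omega> in M. F s x0 xt q (S s \<omega>) \<noteq> q'"
    if "s \<ge> 1" "scheme_kernel \<alpha> \<beta> s x0 xt q q' = 0" for s x0 xt q q'
  proof (rule AE_I')
    show "{\<omega> \<in> space M. F s x0 xt q (S s \<omega>) = q'} \<in> null_sets M"
      using F_law[OF that(1)] that(2) by (simp add: null_sets_def emeasure_eq_measure)
  qed auto
  then have "AE \<omega> in M. \<forall>s. s \<ge> 1 \<longrightarrow> (\<forall>x0 xt q q'.
      scheme_kernel \<alpha> \<beta> s x0 xt q q' = 0 \<longrightarrow> F s x0 xt q (S s \<omega>) \<noteq> q')"
    by (simp add: AE_all_countable AE_impI)
  then show ?thesis
    unfolding on_kernel_support_def by (rule eventually_mono) blast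
qed

lemma Q_QAB_step_iff:
  assumes pos: "on_kernel_support \<omega>"
    and s: "s \<ge> 1"
  shows "Q s \<omega> = QAB \<longleftrightarrow> Q (s - 1) \<omega> = QAB \<and> X s \<omega> = ab_track \<alpha> \<beta> (X 0 \<omega>) s
           \<and> F s (X 0 \<omega>) (ab_track \<alpha> \<beta> (X 0 \<omega>) s) QAB (S s \<omega>) = QAB"
proof
  assume QAB: "Q s \<omega> = QAB"
  have step: "Q s \<omega> = F s (X 0 \<omega>) (X s \<omega>) (Q (s - 1) \<omega>) (S s \<omega>)"
    using Q_step[OF s] .
  have "scheme_kernel \<alpha> \<beta> s (X 0 \<omega>) (X s \<omega>) (Q (s - 1) \<omega>)
      (F s (X 0 \<omega>) (X s \<omega>) (Q (s - 1) \<omega>) (S s \<omega>)) \<noteq> 0"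
    using pos s unfolding on_kernel_support_def by blast
  with step QAB have kernel: "scheme_kernel \<alpha> \<beta> s (X 0 \<omega>) (X s \<omega>) (Q (s - 1) \<omega>) QAB \<noteq> 0"
    by simp
  then have prev: "Q (s - 1) \<omega> = QAB"
    using scheme_kernel_single_to_QAB by blast
  with kernel have "X s \<omega> = ab_track \<alpha> \<beta> (X 0 \<omega>) s"
    by (intro scheme_kernel_QAB_QAB_imp_track) simp
  with prev step QAB show "Q (s - 1) \<omega> = QAB \<and> X s \<omega> = ab_track \<alpha> \<beta> (X 0 \<omega>) s
      \<and> F s (X 0 \<omega>) (ab_track \<alpha> \<beta> (X 0 \<omega>) s) QAB (S s \<omega>) = QAB"
    by simp
qed (simp add: Q_step[OF s])

lemma Q_QAB_iff_track:
  assumes pos: "on_kernel_support \<omega>"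
  shows "Q (int n) \<omega> = QAB \<longleftrightarrow> (\<forall>s\<in>{1..int n}. X s \<omega> = ab_track \<alpha> \<beta> (X 0 \<omega>) s
           \<and> F s (X 0 \<omega>) (ab_track \<alpha> \<beta> (X 0 \<omega>) s) QAB (S s \<omega>) = QAB)"
proof (induction n)
  case 0
  then show ?case using Q_init by simp
next
  case (Suc n)
  have "{1..int (Suc n)} = insert (int n + 1) {1..int n}" by auto
  with Suc Q_QAB_step_iff[OF pos, of "int n + 1"] show ?case
    by (auto simp: add.commute)
qed

lemma AE_Q_serves_request: "AE \<omega> in M. \<forall>t. Q t \<omega> = src_query (X t \<omega>) \<or> Q t \<omega> = QAB"
  using AE_on_kernel_support
proof eventually_elim
  case (elim \<omega>)
  show ?case
  proof
    fix t
    show "Q t \<omega> = src_query (X t \<omega>) \<or> Q t \<omega> = QAB"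
    proof (cases "t \<ge> 1")
      case True
      then have "scheme_kernel \<alpha> \<beta> t (X 0 \<omega>) (X t \<omega>) (Q (t - 1) \<omega>)
          (F t (X 0 \<omega>) (X t \<omega>) (Q (t - 1) \<omega>) (S t \<omega>)) \<noteq> 0"
        using elim unfolding on_kernel_support_def by blast
      then have "scheme_kernel \<alpha> \<beta> t (X 0 \<omega>) (X t \<omega>) (Q (t - 1) \<omega>) (Q t \<omega>) \<noteq> 0"
        using Q_step[OF True] by simp
      then show ?thesis by (rule scheme_kernel_support)
    qed (simp add: Q_init)
  qed
qed

lemma request_path_event_in_sigma:
  "{\<omega> \<in> space M. \<forall>i\<in>{0..int n}. X i \<omega> = h i}
     \<in> sigma_sets (space M) {X t -` {x} \<inter> space M | t x. True}"
proof -
  have "{\<omega> \<in> space M. \<forall>i\<in>{0..int n}. X i \<omega> = h i} = (\<Inter>i\<in>{0..int n}. X i -` {h i} \<inter> space M)"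
    by auto
  also have "\<dots> \<in> sigma_sets (space M) {X t -` {x} \<inter> space M | t x. True}"
  proof -
    interpret requests: sigma_algebra "space M" "sigma_sets (space M) {X t -` {x} \<inter> space M | t x. True}"
      by (rule sigma_algebra_sigma_sets) blast
    show ?thesis
    proof (rule requests.finite_INT)
      show "X i -` {h i} \<inter> space M \<in> sigma_sets (space M) {X t -` {x} \<inter> space M | t x. True}" for i
        by (rule sigma_sets.Basic) blast
    qed auto
  qed
  finally show ?thesis .
qed

lemma prob_request_event_Int_randomness:
  assumes A: "A \<in> sigma_sets (space M) {X t -` {x} \<inter> space M | t x. True}"
    and T: "finite T" and B: "\<And>s. s \<in> T \<Longrightarrow> B s \<in> sets N"
  shows "prob (A \<inter> (\<Inter>s\<in>T. S s -` B s \<inter> space M))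
       = prob A * (\<Prod>s\<in>T. prob (S s -` B s \<inter> space M))"
proof -
  let ?A = "\<lambda>i. case i of None \<Rightarrow> A | Some s \<Rightarrow> S s -` B s \<inter> space M"
  have "prob (\<Inter>i\<in>insert None (Some ` T). ?A i) = (\<Prod>i\<in>insert None (Some ` T). prob (?A i))"
    using assms by (intro indep_setsD[OF indep]) auto
  with T show ?thesis by (simp add: prod.reindex image_image)
qed

definition track_event :: "nat \<Rightarrow> src \<Rightarrow> 'w set" where
  "track_event n x0 = {\<omega> \<in> space M. X 0 \<omega> = x0 \<and> (\<forall>s\<in>{1..int n}.
      X s \<omega> = ab_track \<alpha> \<beta> x0 s \<and> F s x0 (ab_track \<alpha> \<beta> x0 s) QAB (S s \<omega>) = QAB)}"

lemma track_event_sets [measurable]: "track_event n x0 \<in> sets M"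
  unfolding track_event_def by measurable

lemma prob_track_event:
  "prob (track_event n x0) = prob {\<omega> \<in> space M. X 0 \<omega> = x0} * \<bar>1 - \<alpha> - \<beta>\<bar> ^ n"
proof -
  let ?g = "ab_track \<alpha> \<beta> x0"
  let ?B = "\<lambda>s. {z \<in> space N. F s x0 (?g s) QAB z = QAB}"
  let ?path = "{\<omega> \<in> space M. \<forall>i\<in>{0..int n}. X i \<omega> = ?g i}"
  have B: "?B s \<in> sets N" for s by measurable
  have "{0..int n} = insert 0 {1..int n}" by auto
  then have "track_event n x0 = ?path \<inter> (\<Inter>s\<in>{1..int n}. S s -` ?B s \<inter> space M)"
    using measurable_space[OF S_meas] by (auto simp: track_event_def)
  then have "prob (track_event n x0) = prob ?path * (\<Prod>s\<in>{1..int n}. prob (S s -` ?B s \<inter> space M))"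
    by (simp only:) (rule prob_request_event_Int_randomness[OF request_path_event_in_sigma _ B], simp)
  also have "prob ?path
      = prob {\<omega> \<in> space M. X 0 \<omega> = x0} * (\<Prod>s\<in>{1..int n}. trans_prob \<alpha> \<beta> (?g (s - 1)) (?g s))"
    using markov_path_prob[where h = ?g, OF markov] by simp
  also have "(\<Prod>s\<in>{1..int n}. prob (S s -` ?B s \<inter> space M))
      = (\<Prod>s\<in>{1..int n}. scheme_kernel \<alpha> \<beta> s x0 (?g s) QAB QAB)"
  proof (rule prod.cong)
    fix s assume "s \<in> {1..int n}"
    moreover have "S s -` ?B s \<inter> space M = {\<omega> \<in> space M. F s x0 (?g s) QAB (S s \<omega>) = QAB}"
      using measurable_space[OF S_meas] by auto
    ultimately show "prob (S s -` ?B s \<inter> space M) = scheme_kernel \<alpha> \<beta> s x0 (?g s) QAB QAB"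
      using F_law by simp
  qed simp
  finally show ?thesis
    by (simp add: mult.assoc prod.distrib[symmetric] trans_prob_mult_scheme_kernel_track[OF ab])
qed

lemma prob_Q_QAB: "prob {\<omega> \<in> space M. Q (int n) \<omega> = QAB} = \<bar>1 - \<alpha> - \<beta>\<bar> ^ n"
proof -
  have "prob {\<omega> \<in> space M. Q (int n) \<omega> = QAB} = prob (track_event n SrcA \<union> track_event n SrcB)"
  proof (rule measure_eq_AE)
    show "AE \<omega> in M. (\<omega> \<in> {\<omega> \<in> space M. Q (int n) \<omega> = QAB})
                     = (\<omega> \<in> track_event n SrcA \<union> track_event n SrcB)"
      using AE_on_kernel_support
    proof eventually_elim
      case (elim \<omega>)
      show ?case
        using Q_QAB_iff_track[OF elim] by (cases "X 0 \<omega>") (auto simp: track_event_def)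
    qed
  qed simp_all
  also have "\<dots> = prob (track_event n SrcA) + prob (track_event n SrcB)"
    by (rule finite_measure_Union) (auto simp: track_event_def)
  also have "\<dots> = prob ({\<omega> \<in> space M. X 0 \<omega> = SrcA} \<union> {\<omega> \<in> space M. X 0 \<omega> = SrcB})
                   * \<bar>1 - \<alpha> - \<beta>\<bar> ^ n"
    by (subst finite_measure_Union) (auto simp: prob_track_event distrib_right)
  also have "{\<omega> \<in> space M. X 0 \<omega> = SrcA} \<union> {\<omega> \<in> space M. X 0 \<omega> = SrcB} = space M"
    using src.exhaust by blast
  finally show ?thesis by (simp add: prob_space)
qed

end

definition decode :: "src \<Rightarrow> qry \<Rightarrow> answer \<Rightarrow> bool list" where
  "decode x q ans =
     (case ans of Single w \<Rightarrow> w | Both wa wb \<Rightarrow> (case x of SrcA \<Rightarrow> wa | SrcB \<Rightarrow> wb))"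

lemma decode_answer_of:
  assumes "q = src_query x \<or> q = QAB"
  shows "decode x q (answer_of q wa wb) = (case x of SrcA \<Rightarrow> wa | SrcB \<Rightarrow> wb)"
  using assms by (cases x) (auto simp: decode_def answer_of_def src_query_def)

lemma (in prob_space) expectation_cost:
  assumes [measurable]: "q \<in> M \<rightarrow>\<^sub>M count_space UNIV"
  shows "(\<integral>\<omega>. cost L (q \<omega>) \<partial>M) = real L + real L * prob {\<omega> \<in> space M. q \<omega> = QAB}"
proof -
  have "(\<integral>\<omega>. cost L (q \<omega>) \<partial>M)
      = (\<integral>\<omega>. real L + real L * indicator {\<omega> \<in> space M. q \<omega> = QAB} \<omega> \<partial>M)"
    by (rule Bochner_Integration.integral_cong) (auto simp: cost_def indicator_def split: qry.split)
  also have "\<dots> = real L + real L * prob {\<omega> \<in> space M. q \<omega> = QAB}"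
    by (subst Bochner_Integration.integral_add)
       (auto intro!: integrable_real_indicator simp: prob_space emeasure_eq_measure)
  finally show ?thesis .
qed

theorem mainTheorem2:
  fixes M :: "'w measure" and N :: "'s measure"
    and \<alpha> \<beta> :: real and L :: nat
    and X :: "int \<Rightarrow> 'w \<Rightarrow> src"
    and W :: "src \<Rightarrow> int \<Rightarrow> 'w \<Rightarrow> bool list"
    and S :: "int \<Rightarrow> 'w \<Rightarrow> 's"
    and F :: "int \<Rightarrow> src \<Rightarrow> src \<Rightarrow> qry \<Rightarrow> 's \<Rightarrow> qry"
    and Q :: "int \<Rightarrow> 'w \<Rightarrow> qry"
  assumes P: "prob_space M"
    and ab: "0 \<le> \<alpha>" "\<alpha> \<le> 1" "0 \<le> \<beta>" "\<beta> \<le> 1"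
    and L: "L > 0"
    and X_meas: "\<And>t. X t \<in> M \<rightarrow>\<^sub>M count_space UNIV"
    and markov: "\<And>t (n::nat) (h::int \<Rightarrow> src) y.
        measure M {\<omega> \<in> space M. X (t + 1) \<omega> = y \<and> (\<forall>i\<in>{t - int n..t}. X i \<omega> = h i)}
        = trans_prob \<alpha> \<beta> (h t) y * measure M {\<omega> \<in> space M. \<forall>i\<in>{t - int n..t}. X i \<omega> = h i}"
    and nondeg: "\<And>t. 0 < measure M {\<omega> \<in> space M. X t \<omega> = SrcA}"
                "\<And>t. measure M {\<omega> \<in> space M. X t \<omega> = SrcA} < 1"
    and W_meas: "\<And>x t. W x t \<in> M \<rightarrow>\<^sub>M count_space UNIV"
    and W_unif: "\<And>x t. distr M (count_space UNIV) (W x t)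
                       = measure_pmf (pmf_of_set {xs :: bool list. length xs = L})"
    and S_meas: "\<And>t. S t \<in> M \<rightarrow>\<^sub>M N"
    and indep: "model_indep M X N S W"
    and F_meas: "\<And>t x0 xt q. F t x0 xt q \<in> N \<rightarrow>\<^sub>M count_space UNIV"
    and F_law: "\<And>t x0 xt q q'. t \<ge> 1 \<Longrightarrow>
        measure M {\<omega> \<in> space M. F t x0 xt q (S t \<omega>) = q'} = scheme_kernel \<alpha> \<beta> t x0 xt q q'"
    and Q_init: "\<And>t \<omega>. t \<le> 0 \<Longrightarrow> Q t \<omega> = QAB"
    and Q_step: "\<And>t \<omega>. t \<ge> 1 \<Longrightarrow> Q t \<omega> = F t (X 0 \<omega>) (X t \<omega>) (Q (t - 1) \<omega>) (S t \<omega>)"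
  shows "(\<forall>t \<ge> 1. measure M {\<omega> \<in> space M. Q t \<omega> = QAB} = \<bar>1 - \<alpha> - \<beta>\<bar> ^ nat t)
       \<and> (\<exists>dec :: src \<Rightarrow> qry \<Rightarrow> answer \<Rightarrow> bool list. \<forall>t.
            AE \<omega> in M. dec (X t \<omega>) (Q t \<omega>) (answer_of (Q t \<omega>) (W SrcA t \<omega>) (W SrcB t \<omega>))
                        = W (X t \<omega>) t \<omega>)
       \<and> (\<forall>t \<ge> 1. (\<integral>\<omega>. cost L (Q t \<omega>) \<partial>M) / real L = 1 + \<bar>1 - \<alpha> - \<beta>\<bar> ^ nat t)
       \<and> (\<forall>t \<le> 0. (\<integral>\<omega>. cost L (Q t \<omega>) \<partial>M) / real L = 2)"
proof -
  interpret ab_query_scheme M N \<alpha> \<beta> X S F Q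
    by (intro ab_query_scheme.intro ab_query_scheme_axioms.intro P ab X_meas markov S_meas
        model_indep_requests_randomness[OF P indep] F_meas F_law Q_init Q_step)
  have QAB: "prob {\<omega> \<in> space M. Q t \<omega> = QAB} = \<bar>1 - \<alpha> - \<beta>\<bar> ^ nat t" if "t \<ge> 1" for t
    using prob_Q_QAB[of "nat t"] that by simp
  have decodable: "AE \<omega> in M. decode (X t \<omega>) (Q t \<omega>) (answer_of (Q t \<omega>) (W SrcA t \<omega>) (W SrcB t \<omega>))
                     = W (X t \<omega>) t \<omega>" for t
    using AE_Q_serves_request
    by eventually_elim (auto simp: decode_answer_of split: src.split)
  have cost: "(\<integral>\<omega>. cost L (Q t \<omega>) \<partial>M) / real L = 1 + prob {\<omega> \<in> space M. Q t \<omega> = QAB}" for t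
    using expectation_cost[OF Q_measurable, of L t] L by (simp add: field_simps)
  have "prob {\<omega> \<in> space M. Q t \<omega> = QAB} = 1" if "t \<le> 0" for t
    using Q_init[OF that] by (simp add: prob_space)
  with QAB decodable cost show ?thesis
    by auto
qed

end
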